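(* Let $f:\mathcal C_n\to\mathbb R$ with $\mathrm{Lip}(f)=L$, and let $h:\mathbb R\to\mathbb R$ be twice differentiable with $|h''(x)|<B$ for all $x$. Then: (1) for every $y\in\mathcal C_n$, $$\|\nabla(h\circ f)(y)-h'(f(y))\nabla f(y)\|_1\le BL^2n\quad\text{and}\quad\|\nabla(h\circ f)(y)-h'(f(y))\nabla f(y)\|_2\le BL^2\sqrt n;$$ (2) for every $x\in[-1,1]^n$, $$\|\nabla(h\circ f)(x)-h'(f(x))\nabla f(x)\|_1\le2BL^2n^{3/2},$$ where $f(x)$, $\nabla f(x)$ and $\nabla(h\circ f)(x)$ denote the harmonic extensions.
   Context: Notation. $\mathcal C_n=\{-1,1\}^n$. Discrete calculus. $\partial_ig(y)=\tfrac12\big(g(y^{i\to1})-g(y^{i\to-1})\big)$, where $y^{i\to\pm1}$ is $y$ with its $i$-th coordinate set to $\pm1$. $\nabla g=(\partial_1g,\dots,\partial_ng)$ and $\mathrm{Lip}(g)=\max_{i,y}|\partial_ig(y)|$. Harmonic extension. Any $g:\mathcal C_n\to\mathbb R$, including each $\partial_ig$, is extended to $[-1,1]^n$ by its unique multilinear polynomial $\sum_{S}\hat g(S)\prod_{i\in S}x_i$. *)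

theory Defs
  imports "HOL-Analysis.Analysis"
begin

definition cube :: "(real ^ 'n) set" where
  "cube = {y. \<forall>i. y $ i = 1 \<or> y $ i = -1}"

definition setc :: "real ^ 'n \<Rightarrow> 'n \<Rightarrow> real \<Rightarrow> real ^ 'n" where
  "setc y i b = (\<chi> j. if j = i then b else y $ j)"

definition dpart :: "'n \<Rightarrow> (real ^ 'n \<Rightarrow> real) \<Rightarrow> real ^ 'n \<Rightarrow> real" where
  "dpart i g y = (g (setc y i 1) - g (setc y i (-1))) / 2"

definition Lip :: "(real ^ ('n::finite) \<Rightarrow> real) \<Rightarrow> real" where
  "Lip g = Max {\<bar>dpart i g y\<bar> | i y. y \<in> cube}"

definition fcoef :: "(real ^ ('n::finite) \<Rightarrow> real) \<Rightarrow> 'n set \<Rightarrow> real" where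
  "fcoef g S = (\<Sum>y\<in>cube. g y * (\<Prod>i\<in>S. y $ i)) / 2 ^ CARD('n)"

definition hext :: "(real ^ ('n::finite) \<Rightarrow> real) \<Rightarrow> real ^ 'n \<Rightarrow> real" where
  "hext g x = (\<Sum>S\<in>Pow (UNIV::'n set). fcoef g S * (\<Prod>i\<in>S. x $ i))"

end

theory Submission
  imports Defs
begin

text \<open>
  At a vertex, the discrete derivative of \<open>h \<circ> f\<close> in direction \<open>i\<close> is a difference
  quotient of \<open>h\<close> over a step of length \<open>2 \<bar>\<partial>\<^sub>if\<bar> \<le> 2L\<close> starting at \<open>f(y)\<close>; Taylor's theorem
  bounds its deviation from \<open>h'(f y) \<partial>\<^sub>if(y)\<close> by \<open>BL\<^sup>2\<close>, which gives (1).

  For (2), the harmonic extension at \<open>x \<in> [-1,1]\<^sup>n\<close> is the expectation under the product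
  measure on the cube with mean \<open>x\<close>. Hence, with \<open>c = f(x)\<close>, the error in direction \<open>i\<close>
  is the expectation of \<open>\<partial>\<^sub>i(h\<circ>f) - h'(c)\<partial>\<^sub>if\<close>, which is pointwise at most
  \<open>BL\<^sup>2 + BL\<bar>f - c\<bar>\<close>. The Efron--Stein inequality for this product measure gives
  \<open>E (f - c)\<^sup>2 \<le> nL\<^sup>2\<close>, so \<open>E \<bar>f - c\<bar> \<le> \<surd>n L\<close>, and summing over \<open>i\<close> gives
  \<open>n BL\<^sup>2 + n\<^sup>3\<^sup>/\<^sup>2 BL\<^sup>2\<close>.
\<close>

definition coord_weight :: "real^'n \<Rightarrow> 'n \<Rightarrow> real \<Rightarrow> real" where
  "coord_weight x i t = (1 + x$i * t) / 2"

definition override_coords :: "real^'n \<Rightarrow> ('n \<Rightarrow> real) \<Rightarrow> 'n set \<Rightarrow> real^'n" where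
  "override_coords y s K = (\<chi> j. if j \<in> K then s j else y$j)"

text \<open>
  \<open>cube_avg x K g y\<close> is the conditional expectation of \<open>g\<close>, for the product measure with
  mean \<open>x\<close>, when the coordinates in \<open>K\<close> are resampled and the others are those of \<open>y\<close>;
  \<open>cube_avg1 x k\<close> is the case \<open>K = {k}\<close>.
\<close>
definition cube_avg :: "real^'n \<Rightarrow> 'n set \<Rightarrow> (real^'n \<Rightarrow> real) \<Rightarrow> real^'n \<Rightarrow> real" where
  "cube_avg x K g y =
     (\<Sum>s\<in>PiE K (\<lambda>_. {-1,1}). (\<Prod>i\<in>K. coord_weight x i (s i)) * g (override_coords y s K))"

definition cube_avg1 :: "real^'n \<Rightarrow> 'n \<Rightarrow> (real^'n \<Rightarrow> real) \<Rightarrow> real^'n \<Rightarrow> real" where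
  "cube_avg1 x k g y =
     coord_weight x k 1 * g (setc y k 1) + coord_weight x k (-1) * g (setc y k (-1))"

definition cube_expect :: "real^('n::finite) \<Rightarrow> (real^'n \<Rightarrow> real) \<Rightarrow> real" where
  "cube_expect x g = cube_avg x UNIV g 0"

lemma setc_setc [simp]: "setc (setc y k t) k t' = setc y k t'"
  by (simp add: setc_def vec_eq_iff)

lemma setc_same: "y$i = t \<Longrightarrow> setc y i t = y"
  by (auto simp: setc_def vec_eq_iff)

lemma coord_weight_sum: "coord_weight x k 1 + coord_weight x k (-1) = 1"
  by (simp add: coord_weight_def field_simps)

lemma coord_weight_nonneg: "\<bar>x$k\<bar> \<le> 1 \<Longrightarrow> t \<in> {-1,1} \<Longrightarrow> 0 \<le> coord_weight x k t"
  by (auto simp: coord_weight_def abs_le_iff)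

lemma sum_minus_one_one: "(\<Sum>t\<in>{-1,1::real}. F t) = F 1 + F (-1)"
  by (simp add: add.commute)

subsection \<open>Conditional expectations on the biased cube\<close>

lemma cube_avg_insert:
  fixes K :: "'n::finite set"
  assumes "k \<notin> K"
  shows "cube_avg x (insert k K) g y = (\<Sum>t\<in>{-1,1}. \<Sum>s\<in>PiE K (\<lambda>_. {-1,1}).
     coord_weight x k t * (\<Prod>i\<in>K. coord_weight x i (s i)) * g (override_coords y (s(k:=t)) (insert k K)))"
proof -
  have "cube_avg x (insert k K) g y = (\<Sum>(t,s)\<in>{-1,1} \<times> PiE K (\<lambda>_. {-1,1}).
     (\<Prod>i\<in>insert k K. coord_weight x i ((s(k:=t)) i)) * g (override_coords y (s(k:=t)) (insert k K)))"
    unfolding cube_avg_def PiE_insert_eq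
    by (subst sum.reindex[OF inj_combinator[OF assms]]) (simp add: case_prod_unfold)
  also have "\<dots> = (\<Sum>(t,s)\<in>{-1,1} \<times> PiE K (\<lambda>_. {-1,1}).
     coord_weight x k t * (\<Prod>i\<in>K. coord_weight x i (s i)) * g (override_coords y (s(k:=t)) (insert k K)))"
  proof (intro sum.cong refl, clarify)
    fix t s
    have "(\<Prod>i\<in>K. coord_weight x i ((s(k:=t)) i)) = (\<Prod>i\<in>K. coord_weight x i (s i))"
      using assms by (intro prod.cong) auto
    then show "(\<Prod>i\<in>insert k K. coord_weight x i ((s(k:=t)) i)) * g (override_coords y (s(k:=t)) (insert k K)) =
       coord_weight x k t * (\<Prod>i\<in>K. coord_weight x i (s i)) * g (override_coords y (s(k:=t)) (insert k K))"
      using assms by simp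
  qed
  finally show ?thesis
    by (simp add: sum.cartesian_product)
qed

lemma override_coords_insert_inner:
  "k \<notin> K \<Longrightarrow> override_coords y (s(k:=t)) (insert k K) = override_coords (setc y k t) s K"
  by (auto simp: override_coords_def setc_def vec_eq_iff)

lemma override_coords_insert_outer:
  "k \<notin> K \<Longrightarrow> override_coords y (s(k:=t)) (insert k K) = setc (override_coords y s K) k t"
  by (auto simp: override_coords_def setc_def vec_eq_iff)

lemma cube_avg_insert_outer:
  fixes K :: "'n::finite set"
  assumes "k \<notin> K"
  shows "cube_avg x (insert k K) g y = cube_avg1 x k (cube_avg x K g) y"
  unfolding cube_avg_insert[OF assms]
  unfolding override_coords_insert_inner[OF assms] sum_minus_one_one cube_avg1_def cube_avg_def
  by (simp add: sum_distrib_left mult.assoc)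

lemma cube_avg_insert_inner:
  fixes K :: "'n::finite set"
  assumes "k \<notin> K"
  shows "cube_avg x (insert k K) g y = cube_avg x K (cube_avg1 x k g) y"
  unfolding cube_avg_insert[OF assms]
  unfolding override_coords_insert_outer[OF assms] sum_minus_one_one cube_avg1_def cube_avg_def
  by (simp add: sum_distrib_left sum.distrib algebra_simps)

lemma cube_avg_empty: "cube_avg x {} g y = g y"
  by (simp add: cube_avg_def override_coords_def)

lemma cube_avg1_setc: "cube_avg1 x k g (setc y k t) = cube_avg1 x k g y"
  by (simp add: cube_avg1_def)

lemma cube_avg1_idem: "cube_avg1 x k (cube_avg1 x k g) = cube_avg1 x k g"
proof
  fix y
  have "cube_avg1 x k (cube_avg1 x k g) y = (coord_weight x k 1 + coord_weight x k (-1)) * cube_avg1 x k g y"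
    unfolding cube_avg1_def[of x k "cube_avg1 x k g"] cube_avg1_setc by (simp add: algebra_simps)
  then show "cube_avg1 x k (cube_avg1 x k g) y = cube_avg1 x k g y"
    by (simp add: coord_weight_sum)
qed

lemma cube_avg1_mult_invariant:
  assumes "\<And>y t. v (setc y k t) = v y"
  shows "cube_avg1 x k (\<lambda>z. u z * v z) y = v y * cube_avg1 x k u y"
  by (simp add: cube_avg1_def assms algebra_simps)

text \<open>\<open>1 - x\<^sub>k\<^sup>2\<close> is the variance of the \<open>k\<close>-th coordinate, and \<open>\<partial>\<^sub>k g\<close> the slope of \<open>g\<close> along it.\<close>

lemma cube_avg1_square:
  "cube_avg1 x k (\<lambda>z. (w z)^2) y = (cube_avg1 x k w y)^2 + (1 - (x$k)^2) * (dpart k w y)^2"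
  by (simp add: cube_avg1_def coord_weight_def dpart_def power2_eq_square field_simps)

lemma cube_avg1_square_deviation:
  "cube_avg1 x k (\<lambda>z. (g z - cube_avg1 x k g z)^2) y = (1 - (x$k)^2) * (dpart k g y)^2"
  by (simp add: cube_avg1_def coord_weight_def dpart_def power2_eq_square field_simps)

lemma cube_avg_UNIV: "cube_avg x UNIV g y = cube_expect x g"
  by (simp add: cube_expect_def cube_avg_def override_coords_def)

lemma cube_expect_avg1: "cube_expect x (cube_avg1 x k g) = cube_expect x g"
proof -
  have U: "UNIV = insert k (UNIV - {k})" by auto
  have "cube_expect x (cube_avg1 x k g) = cube_avg x (UNIV - {k}) (cube_avg1 x k (cube_avg1 x k g)) 0"
    unfolding cube_expect_def by (subst U, subst cube_avg_insert_inner) auto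
  also have "\<dots> = cube_expect x g"
    unfolding cube_avg1_idem cube_expect_def by (subst (2) U, subst cube_avg_insert_inner) auto
  finally show ?thesis .
qed

lemma cube_expect_add: "cube_expect x (\<lambda>y. g y + h y) = cube_expect x g + cube_expect x h"
  by (simp add: cube_expect_def cube_avg_def algebra_simps sum.distrib)

lemma cube_expect_cmult: "cube_expect x (\<lambda>y. c * g y) = c * cube_expect x g"
  by (simp add: cube_expect_def cube_avg_def algebra_simps sum_distrib_left)

lemma cube_expect_diff: "cube_expect x (\<lambda>y. g y - h y) = cube_expect x g - cube_expect x h"
  by (simp add: cube_expect_def cube_avg_def algebra_simps sum_subtractf)

lemma cube_expect_const: "cube_expect x (\<lambda>y. c) = c"
proof -
  have "cube_expect x (\<lambda>y. c) = c * (\<Sum>s\<in>PiE UNIV (\<lambda>_. {-1,1}). \<Prod>i\<in>UNIV. coord_weight x i (s i))"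
    by (simp add: cube_expect_def cube_avg_def sum_distrib_left algebra_simps)
  also have "(\<Sum>s\<in>PiE UNIV (\<lambda>_. {-1,1}). \<Prod>i\<in>UNIV. coord_weight x i (s i)) =
      (\<Prod>i\<in>UNIV. \<Sum>t\<in>{-1,1}. coord_weight x i t)"
    by (rule prod_sum_PiE[symmetric]) auto
  also have "\<dots> = 1" by (simp add: coord_weight_sum add.commute)
  finally show ?thesis by simp
qed

lemma override_coords_in_cube: "s \<in> PiE UNIV (\<lambda>_. {-1,1}) \<Longrightarrow> override_coords y s UNIV \<in> cube"
  by (auto simp: override_coords_def cube_def PiE_def Pi_def)

lemma cube_expect_mono:
  fixes x :: "real^'n::finite"
  assumes x: "\<forall>i. \<bar>x$i\<bar> \<le> 1" and le: "\<And>y. y \<in> cube \<Longrightarrow> g y \<le> h y"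
  shows "cube_expect x g \<le> cube_expect x h"
  unfolding cube_expect_def cube_avg_def
proof (intro sum_mono mult_left_mono)
  fix s assume s: "s \<in> PiE (UNIV::'n set) (\<lambda>_. {-1,1::real})"
  show "g (override_coords 0 s UNIV) \<le> h (override_coords 0 s UNIV)"
    using le override_coords_in_cube[OF s] .
  show "0 \<le> (\<Prod>i\<in>UNIV. coord_weight x i (s i))"
    using s x by (intro prod_nonneg coord_weight_nonneg) (auto simp: PiE_def)
qed

lemma cube_expect_abs_le:
  fixes x :: "real^'n::finite"
  assumes x: "\<forall>i. \<bar>x$i\<bar> \<le> 1" and le: "\<And>y. y \<in> cube \<Longrightarrow> \<bar>g y\<bar> \<le> h y"
  shows "\<bar>cube_expect x g\<bar> \<le> cube_expect x h"
proof -
  have "cube_expect x g \<le> cube_expect x h"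
    by (rule cube_expect_mono[OF x]) (use le in force)
  moreover have "cube_expect x (\<lambda>y. (-1) * g y) \<le> cube_expect x h"
    by (rule cube_expect_mono[OF x]) (use le in force)
  ultimately show ?thesis
    unfolding cube_expect_cmult by linarith
qed

lemma cube_expect_abs_le_sqrt:
  fixes x :: "real^'n::finite"
  assumes x: "\<forall>i. \<bar>x$i\<bar> \<le> 1"
  shows "cube_expect x (\<lambda>y. \<bar>g y\<bar>) \<le> sqrt (cube_expect x (\<lambda>y. (g y)^2))"
proof -
  define m where "m = cube_expect x (\<lambda>y. \<bar>g y\<bar>)"
  have "0 \<le> cube_expect x (\<lambda>y. (\<bar>g y\<bar> - m)^2)"
    using cube_expect_mono[OF x, of "\<lambda>y. 0"] by (simp add: cube_expect_const)
  also have "cube_expect x (\<lambda>y. (\<bar>g y\<bar> - m)^2) = cube_expect x (\<lambda>y. (g y)^2 + ((-2*m) * \<bar>g y\<bar> + m^2))"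
    by (rule arg_cong[where f="cube_expect x"]) (simp add: power2_eq_square algebra_simps)
  also have "\<dots> = cube_expect x (\<lambda>y. (g y)^2) + ((-2*m) * m + m^2)"
    by (simp only: cube_expect_add cube_expect_cmult cube_expect_const m_def[symmetric])
  finally have "m^2 \<le> cube_expect x (\<lambda>y. (g y)^2)"
    by (simp add: power2_eq_square)
  then show ?thesis
    unfolding m_def by (rule real_le_rsqrt)
qed

subsection \<open>The Efron--Stein inequality\<close>

lemma cube_expect_orthogonal:
  assumes "\<And>y. cube_avg1 x k u y = 0" and "\<And>y t. v (setc y k t) = v y"
  shows "cube_expect x (\<lambda>y. u y * v y) = 0"
proof -
  have "cube_expect x (\<lambda>y. u y * v y) = cube_expect x (cube_avg1 x k (\<lambda>y. u y * v y))"
    by (rule cube_expect_avg1[symmetric])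
  also have "cube_avg1 x k (\<lambda>y. u y * v y) = (\<lambda>y. 0)"
    by (simp add: fun_eq_iff cube_avg1_mult_invariant[of v, OF assms(2)] assms(1))
  finally show ?thesis
    by (simp add: cube_expect_const)
qed

lemma cube_expect_square_deviation_avg1:
  fixes x :: "real^'n::finite"
  assumes x: "\<forall>i. \<bar>x$i\<bar> \<le> 1"
  shows "cube_expect x (\<lambda>y. (g y - cube_avg1 x k g y)^2) \<le> cube_expect x (\<lambda>y. (dpart k g y)^2)"
proof -
  have "cube_expect x (\<lambda>y. (g y - cube_avg1 x k g y)^2)
      = cube_expect x (cube_avg1 x k (\<lambda>y. (g y - cube_avg1 x k g y)^2))"
    by (rule cube_expect_avg1[symmetric])
  also have "\<dots> \<le> cube_expect x (\<lambda>y. (dpart k g y)^2)"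
    unfolding cube_avg1_square_deviation
    using x by (intro cube_expect_mono[OF x] mult_left_le_one_le) (auto simp: abs_square_le_1)
  finally show ?thesis .
qed

lemma efron_stein:
  fixes x :: "real^'n::finite" and K :: "'n set"
  assumes x: "\<forall>i. \<bar>x$i\<bar> \<le> 1"
  shows "cube_expect x (\<lambda>y. (g y - cube_avg x K g y)^2) \<le> (\<Sum>k\<in>K. cube_expect x (\<lambda>y. (dpart k g y)^2))"
  using finite[of K]
proof (induction K rule: finite_induct)
  case empty
  then show ?case by (simp add: cube_avg_empty cube_expect_const)
next
  case (insert k K)
  define w where "w = (\<lambda>y. g y - cube_avg x K g y)"
  define u where "u = (\<lambda>y. g y - cube_avg1 x k g y)"
  define v where "v = cube_avg1 x k w"
  have split: "g y - cube_avg x (insert k K) g y = u y + v y" for y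
    unfolding cube_avg_insert_outer[OF insert(2)] u_def v_def w_def cube_avg1_def
    by (simp add: algebra_simps)
  have "cube_avg1 x k u y = 0" for y
    using fun_cong[OF cube_avg1_idem, of x k g y] by (simp add: u_def cube_avg1_def algebra_simps)
  then have cross: "cube_expect x (\<lambda>y. u y * v y) = 0"
    by (rule cube_expect_orthogonal) (simp add: v_def cube_avg1_setc)
  have "cube_expect x (\<lambda>y. (v y)^2) \<le> cube_expect x (cube_avg1 x k (\<lambda>z. (w z)^2))"
    unfolding cube_avg1_square v_def
    by (rule cube_expect_mono[OF x]) (use x in \<open>auto simp: abs_square_le_1\<close>)
  then have vsq: "cube_expect x (\<lambda>y. (v y)^2) \<le> cube_expect x (\<lambda>y. (w y)^2)"
    by (simp add: cube_expect_avg1)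
  have "cube_expect x (\<lambda>y. (g y - cube_avg x (insert k K) g y)^2)
      = cube_expect x (\<lambda>y. (u y)^2 + 2 * (u y * v y) + (v y)^2)"
    unfolding split by (simp add: power2_eq_square algebra_simps)
  also have "\<dots> = cube_expect x (\<lambda>y. (u y)^2) + 2 * cube_expect x (\<lambda>y. u y * v y) + cube_expect x (\<lambda>y. (v y)^2)"
    by (simp add: cube_expect_add cube_expect_cmult)
  also have "\<dots> \<le> cube_expect x (\<lambda>y. (dpart k g y)^2) + (\<Sum>k\<in>K. cube_expect x (\<lambda>y. (dpart k g y)^2))"
    using cross vsq insert(3) cube_expect_square_deviation_avg1[OF x, of g k]
    unfolding u_def w_def by linarith
  finally show ?case
    using insert(1,2) by simp
qed

subsection \<open>The harmonic extension as an expectation\<close>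

lemma cube_eq_image_PiE: "cube = (\<lambda>s. \<chi> i. s i) ` PiE (UNIV::'n::finite set) (\<lambda>_. {-1,1})"
proof (rule set_eqI iffI)+
  fix y :: "real^'n" assume "y \<in> cube"
  then have "(\<lambda>i. y$i) \<in> PiE UNIV (\<lambda>_. {-1,1})" by (auto simp: cube_def PiE_def Pi_def)
  then show "y \<in> (\<lambda>s. \<chi> i. s i) ` PiE UNIV (\<lambda>_. {-1,1})"
    by (intro image_eqI[where x="\<lambda>i. y$i"]) auto
qed (auto simp: cube_def PiE_def Pi_def)

lemma finite_cube: "finite (cube :: (real^'n::finite) set)"
  unfolding cube_eq_image_PiE by (intro finite_imageI finite_PiE) auto

lemma hext_eq_cube_expect:
  fixes g :: "real^'n::finite \<Rightarrow> real"
  shows "hext g x = cube_expect x g"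
proof -
  have "hext g x = (\<Sum>S\<in>Pow UNIV. \<Sum>y\<in>cube. g y / 2 ^ CARD('n) * ((\<Prod>i\<in>S. y$i) * (\<Prod>i\<in>S. x$i)))"
    unfolding hext_def fcoef_def
    by (simp add: sum_divide_distrib sum_distrib_left sum_distrib_right mult_ac)
  also have "\<dots> = (\<Sum>y\<in>cube. g y / 2 ^ CARD('n) * (\<Sum>S\<in>Pow UNIV. \<Prod>i\<in>S. y$i * x$i))"
    by (subst sum.swap) (simp add: sum_distrib_left prod.distrib)
  also have "\<dots> = (\<Sum>y\<in>cube. g y * (\<Prod>i\<in>UNIV. coord_weight x i (y$i)))"
  proof (rule sum.cong[OF refl])
    fix y :: "real^'n"
    have "(\<Sum>S\<in>Pow UNIV. \<Prod>i\<in>S. y$i * x$i) = (\<Prod>i\<in>UNIV. y$i * x$i + 1)"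
      by (subst prod_add) auto
    moreover have "(\<Prod>i\<in>UNIV. coord_weight x i (y$i)) = (\<Prod>i\<in>UNIV. y$i * x$i + 1) / 2 ^ CARD('n)"
      unfolding coord_weight_def by (simp add: prod_dividef algebra_simps)
    ultimately show "g y / 2 ^ CARD('n) * (\<Sum>S\<in>Pow UNIV. \<Prod>i\<in>S. y$i * x$i) =
        g y * (\<Prod>i\<in>UNIV. coord_weight x i (y$i))"
      by simp
  qed
  also have "\<dots> = cube_expect x g"
    unfolding cube_expect_def cube_avg_def cube_eq_image_PiE
    by (subst sum.reindex) (auto simp: inj_on_def vec_eq_iff mult.commute override_coords_def)
  finally show ?thesis .
qed

lemma abs_dpart_le_Lip:
  fixes f :: "real^'n::finite \<Rightarrow> real"
  assumes "y \<in> cube"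
  shows "\<bar>dpart i f y\<bar> \<le> Lip f"
proof -
  have "{\<bar>dpart i f y\<bar> | i y. y \<in> cube} = (\<lambda>(i,y). \<bar>dpart i f y\<bar>) ` (UNIV \<times> cube)"
    by auto
  then show ?thesis
    unfolding Lip_def using assms finite_cube by (auto intro!: Max_ge finite_imageI)
qed

lemma Lip_nonneg: "0 \<le> Lip (f :: real^'n::finite \<Rightarrow> real)"
proof -
  have "(\<chi> i. 1) \<in> (cube :: (real^'n) set)" by (simp add: cube_def)
  then show ?thesis
    by (meson abs_dpart_le_Lip abs_ge_zero order_trans)
qed

lemma taylor_second_order_bound:
  fixes h h' h'' :: "real \<Rightarrow> real"
  assumes d1: "\<And>t. (h has_real_derivative h' t) (at t)"
    and d2: "\<And>t. (h' has_real_derivative h'' t) (at t)"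
    and bd: "\<And>t. \<bar>h'' t\<bar> \<le> B"
  shows "\<bar>h b - h a - h' a * (b - a)\<bar> \<le> B / 2 * (b - a)^2"
proof (cases "b = a")
  case False
  define diff where "diff = (\<lambda>m::nat. if m = 0 then h else if m = 1 then h' else h'')"
  have "\<exists>t. (if b < a then b < t \<and> t < a else a < t \<and> t < b) \<and>
      h b = (\<Sum>m<2. diff m a / fact m * (b - a)^m) + diff 2 t / fact 2 * (b - a)^2"
    by (rule Taylor[where a="min a b" and b="max a b"])
      (use False d1 d2 in \<open>auto simp: diff_def less_2_cases_iff\<close>)
  then obtain t where "h b = (\<Sum>m<2. diff m a / fact m * (b - a)^m) + diff 2 t / fact 2 * (b - a)^2"
    by blast
  then have eq: "h b - h a - h' a * (b - a) = h'' t / 2 * (b - a)^2"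
    by (simp add: diff_def numeral_2_eq_2)
  have "\<bar>h'' t / 2 * (b - a)^2\<bar> \<le> B / 2 * (b - a)^2"
    using bd[of t] by (simp add: abs_mult mult_right_mono)
  then show ?thesis
    unfolding eq .
qed simp

lemma lipschitz_of_bounded_deriv:
  fixes h' h'' :: "real \<Rightarrow> real"
  assumes d2: "\<And>t. (h' has_real_derivative h'' t) (at t)"
    and bd: "\<And>t. \<bar>h'' t\<bar> \<le> B"
  shows "\<bar>h' b - h' a\<bar> \<le> B * \<bar>b - a\<bar>"
proof (cases "b = a")
  case False
  define diff where "diff = (\<lambda>m::nat. if m = 0 then h' else h'')"
  have "\<exists>t. (if b < a then b < t \<and> t < a else a < t \<and> t < b) \<and>
      h' b = (\<Sum>m<1. diff m a / fact m * (b - a)^m) + diff 1 t / fact 1 * (b - a)^1"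
    by (rule Taylor[where a="min a b" and b="max a b"]) (use False d2 in \<open>auto simp: diff_def\<close>)
  then obtain t where "h' b = (\<Sum>m<1. diff m a / fact m * (b - a)^m) + diff 1 t / fact 1 * (b - a)^1"
    by blast
  then have "h' b - h' a = h'' t * (b - a)"
    by (simp add: diff_def)
  then show ?thesis
    using bd[of t] by (simp add: abs_mult mult_right_mono)
qed simp

subsection \<open>The chain rule on the cube\<close>

lemma dpart_comp_error_le:
  fixes f :: "real^'n::finite \<Rightarrow> real" and h h' h'' :: "real \<Rightarrow> real"
  assumes d1: "\<And>t. (h has_real_derivative h' t) (at t)"
    and d2: "\<And>t. (h' has_real_derivative h'' t) (at t)"
    and bd: "\<And>t. \<bar>h'' t\<bar> \<le> B"
    and y: "y \<in> cube" and L: "\<bar>dpart i f y\<bar> \<le> L"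
  shows "\<bar>dpart i (h \<circ> f) y - h' (f y) * dpart i f y\<bar> \<le> B * L^2"
proof -
  define a where "a = f (setc y i 1)"
  define b where "b = f (setc y i (-1))"
  have B0: "0 \<le> B" using bd[of 0] by linarith
  have d: "dpart i f y = (a - b) / 2" and dh: "dpart i (h \<circ> f) y = (h a - h b) / 2"
    by (simp_all add: dpart_def a_def b_def)
  have "\<bar>dpart i (h \<circ> f) y - h' (f y) * dpart i f y\<bar> \<le> B / 4 * (a - b)^2"
  proof (cases "y$i = 1")
    case True
    then have "f y = a" by (simp add: a_def setc_same)
    then have eq: "dpart i (h \<circ> f) y - h' (f y) * dpart i f y = - (h b - h a - h' a * (b - a)) / 2"
      unfolding d dh by (simp add: field_simps)
    show ?thesis
      unfolding eq using taylor_second_order_bound[OF d1 d2 bd, of b a]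
      by (simp add: power2_commute abs_minus_commute[of "h' a * (b - a)"])
  next
    case False
    then have "f y = b" using y by (auto simp: cube_def b_def setc_same)
    then have eq: "dpart i (h \<circ> f) y - h' (f y) * dpart i f y = (h a - h b - h' b * (a - b)) / 2"
      unfolding d dh by (simp add: field_simps)
    show ?thesis
      unfolding eq using taylor_second_order_bound[OF d1 d2 bd, of a b] by simp
  qed
  also have "\<dots> = B * (dpart i f y)^2"
    by (simp add: d power2_eq_square)
  also have "\<dots> \<le> B * L^2"
    using mult_left_mono[OF power_mono[OF L abs_ge_zero, of 2] B0] by (simp add: power2_abs)
  finally show ?thesis .
qed

lemma hext_comp_error_le:
  fixes f :: "real^'n::finite \<Rightarrow> real" and h h' h'' :: "real \<Rightarrow> real"
  assumes d1: "\<And>t. (h has_real_derivative h' t) (at t)"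
    and d2: "\<And>t. (h' has_real_derivative h'' t) (at t)"
    and bd: "\<And>t. \<bar>h'' t\<bar> \<le> B"
    and L: "\<And>y. y \<in> cube \<Longrightarrow> \<bar>dpart i f y\<bar> \<le> L"
    and x: "\<forall>j. \<bar>x$j\<bar> \<le> 1"
  shows "\<bar>hext (dpart i (h \<circ> f)) x - h' (hext f x) * hext (dpart i f) x\<bar>
           \<le> B * L^2 + B * L * cube_expect x (\<lambda>y. \<bar>f y - hext f x\<bar>)"
proof -
  define c where "c = hext f x"
  have "hext (dpart i (h \<circ> f)) x - h' c * hext (dpart i f) x
      = cube_expect x (\<lambda>y. dpart i (h \<circ> f) y - h' c * dpart i f y)"
    by (simp add: hext_eq_cube_expect cube_expect_diff cube_expect_cmult)
  also have "\<bar>\<dots>\<bar> \<le> cube_expect x (\<lambda>y. B * L^2 + (B * L) * \<bar>f y - c\<bar>)"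
  proof (rule cube_expect_abs_le[OF x])
    fix y :: "real^'n" assume y: "y \<in> cube"
    have "\<bar>(h' (f y) - h' c) * dpart i f y\<bar> \<le> B * \<bar>f y - c\<bar> * L"
      unfolding abs_mult using bd[of 0] L[OF y]
      by (intro mult_mono lipschitz_of_bounded_deriv[OF d2 bd]) auto
    then show "\<bar>dpart i (h \<circ> f) y - h' c * dpart i f y\<bar> \<le> B * L^2 + (B * L) * \<bar>f y - c\<bar>"
      using dpart_comp_error_le[OF d1 d2 bd y L[OF y]] by (simp add: algebra_simps abs_le_iff)
  qed
  also have "\<dots> = B * L^2 + B * L * cube_expect x (\<lambda>y. \<bar>f y - c\<bar>)"
    by (simp add: cube_expect_add cube_expect_cmult cube_expect_const)
  finally show ?thesis
    unfolding c_def .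
qed

lemma cube_expect_abs_deviation_le:
  fixes f :: "real^'n::finite \<Rightarrow> real"
  assumes L: "\<And>i y. y \<in> cube \<Longrightarrow> \<bar>dpart i f y\<bar> \<le> L" and "0 \<le> L"
    and x: "\<forall>j. \<bar>x$j\<bar> \<le> 1"
  shows "cube_expect x (\<lambda>y. \<bar>f y - hext f x\<bar>) \<le> sqrt (real CARD('n)) * L"
proof -
  have "cube_expect x (\<lambda>y. (f y - hext f x)^2) \<le> (\<Sum>k\<in>UNIV. cube_expect x (\<lambda>y. (dpart k f y)^2))"
    using efron_stein[OF x, of f UNIV] by (simp add: cube_avg_UNIV hext_eq_cube_expect)
  also have "\<dots> \<le> (\<Sum>k\<in>(UNIV::'n set). L^2)"
  proof (rule sum_mono)
    fix k
    have "cube_expect x (\<lambda>y. (dpart k f y)^2) \<le> cube_expect x (\<lambda>y. L^2)"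
      by (rule cube_expect_mono[OF x]) (metis L abs_ge_zero power2_abs power_mono)
    then show "cube_expect x (\<lambda>y. (dpart k f y)^2) \<le> L^2"
      by (simp add: cube_expect_const)
  qed
  finally have "sqrt (cube_expect x (\<lambda>y. (f y - hext f x)^2)) \<le> sqrt (real CARD('n) * L^2)"
    by simp
  also have "\<dots> = sqrt (real CARD('n)) * L"
    using \<open>0 \<le> L\<close> by (simp add: real_sqrt_mult)
  finally show ?thesis
    by (rule order_trans[OF cube_expect_abs_le_sqrt[OF x]])
qed

lemma sum_abs_le_card_mult:
  fixes v :: "'n::finite \<Rightarrow> real"
  assumes "\<And>i. \<bar>v i\<bar> \<le> c"
  shows "(\<Sum>i\<in>UNIV. \<bar>v i\<bar>) \<le> c * real CARD('n)"
  using sum_mono[of UNIV "\<lambda>i. \<bar>v i\<bar>" "\<lambda>_. c"] assms by (simp add: mult.commute)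

lemma sqrt_sum_squares_le_sqrt_card_mult:
  fixes v :: "'n::finite \<Rightarrow> real"
  assumes "\<And>i. \<bar>v i\<bar> \<le> c"
  shows "sqrt (\<Sum>i\<in>UNIV. (v i)^2) \<le> c * sqrt (real CARD('n))"
proof -
  have "(\<Sum>i\<in>UNIV. (v i)^2) \<le> (\<Sum>i\<in>(UNIV::'n set). c^2)"
    by (intro sum_mono) (metis abs_ge_zero assms power2_abs power_mono)
  then have "sqrt (\<Sum>i\<in>UNIV. (v i)^2) \<le> sqrt (real CARD('n) * c^2)"
    by simp
  also have "\<dots> = c * sqrt (real CARD('n))"
    using assms[of undefined] by (simp add: real_sqrt_mult mult.commute)
  finally show ?thesis .
qed

lemma hext_comp_error_sum_le:
  fixes f :: "real^'n::finite \<Rightarrow> real" and h h' h'' :: "real \<Rightarrow> real"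
  assumes d1: "\<And>t. (h has_real_derivative h' t) (at t)"
    and d2: "\<And>t. (h' has_real_derivative h'' t) (at t)"
    and bd: "\<And>t. \<bar>h'' t\<bar> \<le> B"
    and L: "\<And>i y. y \<in> cube \<Longrightarrow> \<bar>dpart i f y\<bar> \<le> L" and "0 \<le> L"
    and x: "\<forall>j. \<bar>x$j\<bar> \<le> 1"
  shows "(\<Sum>i\<in>UNIV. \<bar>hext (dpart i (h \<circ> f)) x - h' (hext f x) * hext (dpart i f) x\<bar>)
           \<le> 2 * B * L^2 * real CARD('n) powr (3/2)"
proof -
  define n where "n = real CARD('n)"
  have "0 \<le> B" and "1 \<le> n" using bd[of 0] by (auto simp: n_def)
  have "B * L^2 + B * L * cube_expect x (\<lambda>y. \<bar>f y - hext f x\<bar>) \<le> B * L^2 + B * L * (sqrt n * L)"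
    using cube_expect_abs_deviation_le[OF L \<open>0 \<le> L\<close> x] \<open>0 \<le> B\<close> \<open>0 \<le> L\<close>
    by (simp add: n_def mult_left_mono)
  also have "\<dots> \<le> 2 * B * L^2 * sqrt n"
    using \<open>1 \<le> n\<close> \<open>0 \<le> B\<close> mult_left_mono[of 1 "sqrt n" "B * L^2"]
    by (simp add: power2_eq_square algebra_simps)
  finally have "(\<Sum>i\<in>UNIV. \<bar>hext (dpart i (h \<circ> f)) x - h' (hext f x) * hext (dpart i f) x\<bar>)
      \<le> 2 * B * L^2 * sqrt n * n"
    unfolding n_def by (intro sum_abs_le_card_mult order_trans[OF hext_comp_error_le[OF d1 d2 bd L x]])
  also have "\<dots> = 2 * B * L^2 * n powr (3/2)"
    using powr_add[of n 1 "1/2"] \<open>1 \<le> n\<close> by (simp add: powr_half_sqrt mult.commute)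
  finally show ?thesis
    by (simp add: n_def)
qed

theorem mainTheorem10:
  fixes f :: "real ^ ('n::finite) \<Rightarrow> real"
    and h h' h'' :: "real \<Rightarrow> real" and L B :: real
  assumes "Lip f = L"
    and "\<And>t. (h has_real_derivative h' t) (at t)"
    and "\<And>t. (h' has_real_derivative h'' t) (at t)"
    and "\<And>t. \<bar>h'' t\<bar> < B"
  shows "(\<forall>y\<in>cube.
           (\<Sum>i\<in>UNIV. \<bar>dpart i (h \<circ> f) y - h' (f y) * dpart i f y\<bar>)
              \<le> B * L^2 * real CARD('n)
         \<and> sqrt (\<Sum>i\<in>UNIV. (dpart i (h \<circ> f) y - h' (f y) * dpart i f y)^2)
              \<le> B * L^2 * sqrt (real CARD('n)))
       \<and> (\<forall>x. (\<forall>i. \<bar>x $ i\<bar> \<le> 1) \<longrightarrow>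
           (\<Sum>i\<in>UNIV. \<bar>hext (dpart i (h \<circ> f)) x - h' (hext f x) * hext (dpart i f) x\<bar>)
              \<le> 2 * B * L^2 * real CARD('n) powr (3/2))"
proof -
  have bd: "\<And>t. \<bar>h'' t\<bar> \<le> B" using assms(4) less_imp_le by blast
  have L: "\<And>i y. y \<in> cube \<Longrightarrow> \<bar>dpart i f y\<bar> \<le> L"
    using abs_dpart_le_Lip assms(1) by blast
  have "0 \<le> L" using Lip_nonneg[of f] assms(1) by simp
  have vertex: "\<bar>dpart i (h \<circ> f) y - h' (f y) * dpart i f y\<bar> \<le> B * L^2" if "y \<in> cube" for i y
    using dpart_comp_error_le[OF assms(2,3) bd that L[OF that]] .
  show ?thesis
  proof (intro conjI ballI allI impI)
    fix y :: "real^'n" assume "y \<in> cube"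
    then show "(\<Sum>i\<in>UNIV. \<bar>dpart i (h \<circ> f) y - h' (f y) * dpart i f y\<bar>) \<le> B * L^2 * real CARD('n)"
      by (intro sum_abs_le_card_mult vertex)
    from \<open>y \<in> cube\<close>
    show "sqrt (\<Sum>i\<in>UNIV. (dpart i (h \<circ> f) y - h' (f y) * dpart i f y)^2) \<le> B * L^2 * sqrt (real CARD('n))"
      by (intro sqrt_sum_squares_le_sqrt_card_mult vertex)
  qed (rule hext_comp_error_sum_le[OF assms(2,3) bd L \<open>0 \<le> L\<close>])
qed

end
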